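(* Let $X$ be a completely regular space and $G$ an infinite open subset of $X$. Then there exist a sequence $(x_n)_{n=1}^\infty$ in $G$ and a continuous function $f:X\to[-1,1]$ such that $\operatorname{supp}f\subseteq G$, $f(x_{2k-1})=\frac1k$ and $f(x_{2k})=-\frac1k$ for all $k\in\mathbb N$.
   Context: Completely regular spaces are assumed $T_1$. For $f:X\to\mathbb R$, $\operatorname{supp}f=\{x\in X:f(x)\ne0\}$. *)

theory Defs
  imports "HOL-Analysis.Analysis"
begin

end

(*
  In a Hausdorff space an infinite open set contains a sequence of pairwise disjoint nonempty
  open sets U n: repeatedly split off a nonempty open piece while keeping an infinite open
  remainder. Pick x n in U n and, by complete regularity, bumps g n : X -> [0,1] with
  g n (x n) = 1 vanishing outside U n. Then f = (SUM n. c n * g n) with c = 1, -1, 1/2, -1/2, ...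
  has at most one nonzero term at every point, and since c n -> 0 its partial sums converge
  uniformly, so f is continuous.
*)

theory Submission
  imports Defs
begin

lemma Hausdorff_space_split_infinite_open:
  assumes "Hausdorff_space X" and "openin X W" and "infinite W"
  obtains U W' where "openin X U" "U \<noteq> {}" "openin X W'" "infinite W'"
    "U \<subseteq> W" "W' \<subseteq> W" "disjnt U W'"
proof -
  obtain a where a: "a \<in> W"
    using infinite_imp_nonempty[OF \<open>infinite W\<close>] by blast
  obtain b where b: "b \<in> W" "b \<noteq> a"
    using infinite_imp_nonempty[of "W - {a}"] \<open>infinite W\<close> by auto
  have "a \<in> topspace X" "b \<in> topspace X"
    using a b openin_subset[OF assms(2)] by auto
  then obtain A B where AB: "openin X A" "openin X B" "a \<in> A" "b \<in> B" "disjnt A B"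
    using assms(1) b(2) unfolding Hausdorff_space_def by blast
  show thesis
  proof (cases "finite (W \<inter> A)")
    case True
    moreover have "W \<inter> A \<subseteq> topspace X"
      using openin_subset[OF assms(2)] by blast
    ultimately have "closedin X (W \<inter> A)"
      using Hausdorff_imp_t1_space[OF assms(1)] by (simp add: t1_space_closedin_finite)
    have W_minus_A: "W - A = W - (W \<inter> A)"
      by blast
    have "openin X (W - A)"
      unfolding W_minus_A using assms(2) \<open>closedin X (W \<inter> A)\<close> by (rule openin_diff)
    moreover have "infinite (W - A)"
      unfolding W_minus_A using True assms(3) by (rule Diff_infinite_finite)
    ultimately show thesis
      using that[of "W \<inter> A" "W - A"] assms(2) AB a by (auto simp: disjnt_def)
  next
    case False
    then show thesis
      using that[of "W \<inter> B" "W \<inter> A"] assms(2) AB b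
      by (auto simp: disjnt_def)
  qed
qed

lemma Hausdorff_space_disjoint_open_sequence:
  assumes "Hausdorff_space X" and "openin X G" and "infinite G"
  obtains U :: "nat \<Rightarrow> 'a set"
  where "\<And>n. openin X (U n)" "\<And>n. U n \<noteq> {}" "\<And>n. U n \<subseteq> G" "disjoint_family U"
proof -
  have "\<exists>U W'. openin X W \<longrightarrow> infinite W \<longrightarrow> openin X U \<and> U \<noteq> {} \<and>
      openin X W' \<and> infinite W' \<and> U \<subseteq> W \<and> W' \<subseteq> W \<and> disjnt U W'" for W
    by (meson Hausdorff_space_split_infinite_open[OF assms(1)])
  then obtain L R where LR: "\<And>W. openin X W \<Longrightarrow> infinite W \<Longrightarrow>
      openin X (L W) \<and> L W \<noteq> {} \<and> openin X (R W) \<and> infinite (R W) \<and>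
      L W \<subseteq> W \<and> R W \<subseteq> W \<and> disjnt (L W) (R W)"
    by metis
  define W where "W n = (R ^^ n) G" for n
  have W: "openin X (W n) \<and> infinite (W n) \<and> W n \<subseteq> G" for n
    by (induction n) (use assms(2,3) LR in \<open>auto simp: W_def\<close>)
  have "decseq W"
    using W LR by (intro decseq_SucI) (simp add: W_def)
  have disjnt_less: "disjnt (L (W m)) (L (W n))" if "m < n" for m n
  proof -
    have "L (W n) \<subseteq> W n"
      using W LR by blast
    also have "\<dots> \<subseteq> W (Suc m)"
      using \<open>decseq W\<close> that by (simp add: decseqD)
    also have "\<dots> = R (W m)"
      by (simp add: W_def)
    finally show ?thesis
      using W LR by (blast intro: disjnt_subset2)
  qed
  have "disjoint_family (\<lambda>n. L (W n))"
    unfolding disjoint_family_on_def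
    by (metis disjnt_def disjnt_less disjnt_sym linorder_neqE_nat)
  with W LR show thesis
    using that[of "\<lambda>n. L (W n)"] by blast
qed

lemma completely_regular_space_bump:
  assumes "completely_regular_space X" and "openin X U" and "x \<in> U"
  shows "\<exists>g. continuous_map X (top_of_set {0..1::real}) g \<and> g x = 1 \<and>
    (\<forall>y \<in> topspace X - U. g y = 0)"
proof -
  have "closedin X (topspace X - U)" "x \<in> topspace X - (topspace X - U)"
    using assms(2,3) openin_subset by auto
  then obtain h :: "'a \<Rightarrow> real" where h: "continuous_map X (top_of_set {0..1}) h" "h x = 0"
    "h ` (topspace X - U) \<subseteq> {1}"
    using assms(1) unfolding completely_regular_space_def by blast
  have "continuous_map X (top_of_set {0..1}) (\<lambda>y. 1 - h y)"
    using h(1) by (auto simp: continuous_map_in_subtopology intro: continuous_map_diff)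
  with h show ?thesis
    by (intro exI[of _ "\<lambda>y. 1 - h y"]) auto
qed

lemma single_nonzero_term_sums:
  fixes a :: "nat \<Rightarrow> 'b::real_normed_vector"
  assumes "\<And>m n. a m \<noteq> 0 \<Longrightarrow> a n \<noteq> 0 \<Longrightarrow> m = n"
  shows "\<exists>m. suminf a = a m \<and> (\<forall>N. (\<Sum>n<N. a n) = (if m < N then a m else 0))"
proof -
  obtain m where m: "\<And>n. n \<noteq> m \<Longrightarrow> a n = 0"
    using assms by blast
  have "(\<Sum>n<N. a n) = (\<Sum>n<N. if n = m then a m else 0)" for N
    using m by (intro sum.cong) auto
  then show ?thesis
    using suminf_finite[of "{m}" a] m by auto
qed

lemma continuous_map_suminf_disjoint_supports:
  fixes g :: "nat \<Rightarrow> 'a \<Rightarrow> real"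
  assumes g: "\<And>n. continuous_map X (top_of_set {0..1}) (g n)"
    and disjoint: "\<And>m n y. y \<in> topspace X \<Longrightarrow> g m y \<noteq> 0 \<Longrightarrow> g n y \<noteq> 0 \<Longrightarrow> m = n"
    and "c \<longlonglongrightarrow> 0" and c_le_1: "\<And>n. \<bar>c n\<bar> \<le> 1"
  shows "continuous_map X (top_of_set {-1..1}) (\<lambda>y. \<Sum>n. c n * g n y)"
proof -
  have g_abs: "\<bar>c n * g n y\<bar> \<le> \<bar>c n\<bar>" if "y \<in> topspace X" for n y
    using g[of n] that
    by (auto simp: continuous_map_in_subtopology Pi_iff abs_mult intro: mult_left_le)
  have single_term: "\<exists>m. (\<Sum>n. c n * g n y) = c m * g m y \<and>
      (\<forall>N. (\<Sum>n<N. c n * g n y) = (if m < N then c m * g m y else 0))"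
    if "y \<in> topspace X" for y
  proof -
    have "m = n" if "c m * g m y \<noteq> 0" "c n * g n y \<noteq> 0" for m n
      using disjoint[OF \<open>y \<in> topspace X\<close>] that by simp
    then show ?thesis
      using single_nonzero_term_sums[of "\<lambda>n. c n * g n y"] by blast
  qed
  have "continuous_map X euclideanreal (\<lambda>y. \<Sum>n. c n * g n y)"
  proof (rule Met_TC.continuous_map_uniform_limit_alt
      [where F = sequentially and f = "\<lambda>N y. \<Sum>n<N. c n * g n y", simplified])
    show "\<forall>\<^sub>F N in sequentially. continuous_map X euclideanreal (\<lambda>y. \<Sum>n<N. c n * g n y)"
      using g by (intro always_eventually allI continuous_map_sum continuous_map_real_mult_left)
        (auto simp: continuous_map_in_subtopology)
  next
    fix e :: real
    assume "0 < e"
    then obtain N where N: "\<And>n. n \<ge> N \<Longrightarrow> \<bar>c n\<bar> < e"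
      using \<open>c \<longlonglongrightarrow> 0\<close> by (auto simp: LIMSEQ_iff)
    have "\<bar>(\<Sum>n<M. c n * g n y) - (\<Sum>n. c n * g n y)\<bar> < e"
      if "M \<ge> N" and y: "y \<in> topspace X" for M y
    proof -
      obtain m where m: "(\<Sum>n. c n * g n y) = c m * g m y"
        "(\<Sum>n<M. c n * g n y) = (if m < M then c m * g m y else 0)"
        using single_term[OF y] by blast
      show ?thesis
      proof (cases "m < M")
        case True
        then show ?thesis
          using m \<open>0 < e\<close> by simp
      next
        case False
        then show ?thesis
          using m g_abs[OF y, of m] N[of m] \<open>M \<ge> N\<close> by simp
      qed
    qed
    then show "\<forall>\<^sub>F M in sequentially. \<forall>y\<in>topspace X.
        dist (\<Sum>n<M. c n * g n y) (\<Sum>n. c n * g n y) < e"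
      by (auto simp: dist_real_def eventually_sequentially)
  qed
  moreover have "\<bar>\<Sum>n. c n * g n y\<bar> \<le> 1" if "y \<in> topspace X" for y
    using single_term[OF that] g_abs[OF that] c_le_1 by (metis order_trans)
  ultimately show ?thesis
    by (auto simp: continuous_map_in_subtopology abs_le_iff)
qed

lemma completely_regular_space_interpolate_on_disjoint_opens:
  fixes c :: "nat \<Rightarrow> real"
  assumes "completely_regular_space X" and U: "\<And>n. openin X (U n)" "disjoint_family U"
    and x: "\<And>n. x n \<in> U n" and "c \<longlonglongrightarrow> 0" and "\<And>n. \<bar>c n\<bar> \<le> 1"
  shows "\<exists>f. continuous_map X (top_of_set {-1..1}) f \<and>
    {y \<in> topspace X. f y \<noteq> 0} \<subseteq> (\<Union>n. U n) \<and> (\<forall>n. f (x n) = c n)"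
proof -
  have "\<exists>g. \<forall>n. continuous_map X (top_of_set {0..1::real}) (g n) \<and> g n (x n) = 1 \<and>
      (\<forall>y \<in> topspace X - U n. g n y = 0)"
    by (rule choice, intro allI completely_regular_space_bump[OF assms(1) U(1) x])
  then obtain g :: "nat \<Rightarrow> 'a \<Rightarrow> real"
    where g: "\<And>n. continuous_map X (top_of_set {0..1}) (g n)" "\<And>n. g n (x n) = 1"
      and g_supp: "\<And>n y. y \<in> topspace X \<Longrightarrow> g n y \<noteq> 0 \<Longrightarrow> y \<in> U n"
    by blast
  have g_disjoint: "m = n" if "y \<in> topspace X" "g m y \<noteq> 0" "g n y \<noteq> 0" for m n y
    using g_supp[OF that(1,2)] g_supp[OF that(1,3)] U(2) by (auto simp: disjoint_family_on_def)
  define f where "f y = (\<Sum>n. c n * g n y)" for y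
  have "continuous_map X (top_of_set {-1..1}) f"
    unfolding f_def using g(1) g_disjoint assms(5,6) by (rule continuous_map_suminf_disjoint_supports)
  moreover have "{y \<in> topspace X. f y \<noteq> 0} \<subseteq> (\<Union>n. U n)"
  proof (intro subsetI, rule ccontr)
    fix y
    assume y: "y \<in> {y \<in> topspace X. f y \<noteq> 0}" and "y \<notin> (\<Union>n. U n)"
    then have "g n y = 0" for n
      using g_supp by blast
    with y show False
      by (simp add: f_def)
  qed
  moreover have "f (x n) = c n" for n
  proof -
    have "x n \<in> topspace X"
      using x U(1) openin_subset by blast
    then have "g m (x n) = 0" if "m \<noteq> n" for m
      using g_disjoint[of "x n" m n] g(2) that by auto
    then show ?thesis
      using suminf_finite[of "{n}" "\<lambda>m. c m * g m (x n)"] g(2) by (auto simp: f_def)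
  qed
  ultimately show ?thesis
    by blast
qed

definition alternating_reciprocal :: "nat \<Rightarrow> real" where
  "alternating_reciprocal n = (if odd n then 1 else - 1) / real ((n + 1) div 2)"

lemma alternating_reciprocal_odd: "k \<ge> 1 \<Longrightarrow> alternating_reciprocal (2 * k - 1) = 1 / real k"
  by (auto simp: alternating_reciprocal_def)

lemma alternating_reciprocal_even: "alternating_reciprocal (2 * k) = - 1 / real k"
  by (simp add: alternating_reciprocal_def)

lemma abs_alternating_reciprocal: "\<bar>alternating_reciprocal n\<bar> = 1 / real ((n + 1) div 2)"
  by (simp add: alternating_reciprocal_def)

lemma abs_alternating_reciprocal_le_1: "\<bar>alternating_reciprocal n\<bar> \<le> 1"
  unfolding abs_alternating_reciprocal by (cases "(n + 1) div 2") auto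

lemma alternating_reciprocal_tendsto_0: "alternating_reciprocal \<longlonglongrightarrow> 0"
proof (rule Lim_null_comparison)
  have "1 / real ((n + 1) div 2) \<le> 2 / real n" if "n \<ge> 1" for n
  proof -
    have "real n \<le> 2 * real ((n + 1) div 2)" "0 < real ((n + 1) div 2)"
      using that by linarith+
    with that show ?thesis
      by (simp add: divide_simps del: of_nat_Suc)
  qed
  then show "\<forall>\<^sub>F n in sequentially. norm (alternating_reciprocal n) \<le> 2 / real n"
    by (auto simp: eventually_sequentially abs_alternating_reciprocal)
  show "(\<lambda>n. 2 / real n) \<longlonglongrightarrow> 0"
    by (rule lim_const_over_n)
qed

theorem lemma6p2:
  fixes X :: "'a topology" and G :: "'a set"
  assumes "completely_regular_space X" and "t1_space X"
    and "openin X G" and "infinite G"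
  shows "\<exists>(x :: nat \<Rightarrow> 'a) (f :: 'a \<Rightarrow> real).
           (\<forall>n\<ge>1. x n \<in> G) \<and>
           continuous_map X (subtopology euclideanreal {-1..1}) f \<and>
           {y \<in> topspace X. f y \<noteq> 0} \<subseteq> G \<and>
           (\<forall>k::nat. k \<ge> 1 \<longrightarrow> f (x (2*k - 1)) = 1 / real k \<and> f (x (2*k)) = - 1 / real k)"
proof -
  have "Hausdorff_space X"
    using assms(1,2) completely_regular_imp_regular_space regular_t1_imp_Hausdorff_space by blast
  then obtain U :: "nat \<Rightarrow> 'a set"
    where U: "\<And>n. openin X (U n)" "\<And>n. U n \<noteq> {}" "\<And>n. U n \<subseteq> G" "disjoint_family U"
    using Hausdorff_space_disjoint_open_sequence assms(3,4) by blast
  have "\<exists>y. y \<in> U n" for n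
    using U(2) by blast
  then obtain x where x: "\<And>n. x n \<in> U n"
    by metis
  obtain f where f: "continuous_map X (top_of_set {-1..1}) f"
    "{y \<in> topspace X. f y \<noteq> 0} \<subseteq> (\<Union>n. U n)" "\<And>n. f (x n) = alternating_reciprocal n"
    using completely_regular_space_interpolate_on_disjoint_opens[OF assms(1) U(1,4) x
        alternating_reciprocal_tendsto_0 abs_alternating_reciprocal_le_1]
    by blast
  show ?thesis
  proof (intro exI[of _ x] exI[of _ f] conjI allI impI)
    show "x n \<in> G" for n
      using x U(3) by blast
    show "{y \<in> topspace X. f y \<noteq> 0} \<subseteq> G"
      using f(2) U(3) by blast
    show "f (x (2 * k - 1)) = 1 / real k" if "k \<ge> 1" for k
      using f(3) alternating_reciprocal_odd[OF that] by simp
    show "f (x (2 * k)) = - 1 / real k" for k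
      using f(3) alternating_reciprocal_even by simp
  qed (rule f(1))
qed

end
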